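(* Let $f:[a,b]\to\mathbb{C}$ be continuous and write $f=g+ih$ with $g,h:[a,b]\to\mathbb{R}$ its real and imaginary parts. If $h$ is Lipschitz, then $$\dim_P(G(f))=\dim_P(G(g)),\quad \overline{\dim}_B(G(f))=\overline{\dim}_B(G(g)),\quad \underline{\dim}_B(G(f))=\underline{\dim}_B(G(g)).$$
   Context: For a function $u$ on $[a,b]$, $G(u)=\{(x,u(x)):x\in[a,b]\}$ denotes its graph; for complex-valued $u$ the graph is regarded as a subset of $\mathbb{R}\times\mathbb{C}\cong\mathbb{R}^3$ with the Euclidean metric, for real-valued $u$ as a subset of $\mathbb{R}^2$. $\dim_P$ is packing dimension, $\overline{\dim}_B$ and $\underline{\dim}_B$ are upper and lower box dimension. *)

theory Defs
  imports "HOL-Analysis.Analysis"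
begin

definition graph_on :: "real set \<Rightarrow> (real \<Rightarrow> 'b) \<Rightarrow> (real \<times> 'b) set" where
  "graph_on S u = (\<lambda>x. (x, u x)) ` S"

text \<open>Covering number N_delta(F): least number of sets of diameter at most delta covering F
  (meaningful for bounded F).\<close>
definition cover_num :: "'a::metric_space set \<Rightarrow> real \<Rightarrow> nat" where
  "cover_num F \<delta> = Inf {card C | C. finite C \<and> (\<forall>U\<in>C. bounded U \<and> diameter U \<le> \<delta>) \<and> F \<subseteq> \<Union>C}"

definition upper_box_dim :: "'a::metric_space set \<Rightarrow> ereal" where
  "upper_box_dim F = Limsup (at_right 0) (\<lambda>\<delta>. ereal (ln (real (cover_num F \<delta>)) / - ln \<delta>))"

definition lower_box_dim :: "'a::metric_space set \<Rightarrow> ereal" where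
  "lower_box_dim F = Liminf (at_right 0) (\<lambda>\<delta>. ereal (ln (real (cover_num F \<delta>)) / - ln \<delta>))"

definition packing_delta :: "real \<Rightarrow> real \<Rightarrow> 'a::metric_space set \<Rightarrow> ennreal" where
  "packing_delta s \<delta> F = (SUP P \<in> {P. countable P \<and> (\<forall>(x,r)\<in>P. x \<in> F \<and> 0 < r \<and> r \<le> \<delta>)
        \<and> disjoint_family_on (\<lambda>(x,r). cball x r) P}.
      (\<Sum>\<^sub>\<infinity>(x,r)\<in>P. ennreal ((2 * r) powr s)))"

definition packing_pre :: "real \<Rightarrow> 'a::metric_space set \<Rightarrow> ennreal" where
  "packing_pre s F = (INF \<delta> \<in> {0<..}. packing_delta s \<delta> F)"

definition packing_measure :: "real \<Rightarrow> 'a::metric_space set \<Rightarrow> ennreal" where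
  "packing_measure s F = (INF A \<in> {A :: nat \<Rightarrow> 'a set. F \<subseteq> (\<Union>i. A i)}. (\<Sum>i. packing_pre s (A i)))"

definition packing_dim :: "'a::metric_space set \<Rightarrow> ereal" where
  "packing_dim F = Sup ({0} \<union> {ereal s | s. 0 \<le> s \<and> packing_measure s F = \<infinity>})"

end

theory Submission
  imports Defs
begin

(* If Im f is L-Lipschitz, then (x, Re f x) \<mapsto> (x, f x) maps G(Re f) onto G(f) and is
   sqrt(1 + L^2)-Lipschitz, while (x, z) \<mapsto> (x, Re z) is 1-Lipschitz and maps G(f) back onto
   G(Re f). So it suffices that Lipschitz images of compact sets have no larger packing or box
   dimensions. A K-Lipschitz map turns covers by sets of diameter \<delta>/K into covers by sets of
   diameter \<delta>, and ln(\<delta>/K) / ln \<delta> \<rightarrow> 1; disjoint closed balls of radii r centred on the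
   image pull back (the target being normed) to disjoint balls of radii r/K, so the packing
   premeasures grow at most by the factor K^s. *)

lemma infsum_cmult_right_ennreal:
  fixes f :: "'a \<Rightarrow> ennreal"
  shows "(\<Sum>\<^sub>\<infinity>x\<in>A. c * f x) = c * (\<Sum>\<^sub>\<infinity>x\<in>A. f x)"
proof -
  have "(\<Sum>\<^sub>\<infinity>x\<in>A. c * f x) = (SUP F\<in>{F. finite F \<and> F \<subseteq> A}. c * sum f F)"
    by (simp add: nonneg_infsum_complete sum_distrib_left)
  also have "\<dots> = c * (\<Sum>\<^sub>\<infinity>x\<in>A. f x)"
    by (simp add: nonneg_infsum_complete SUP_mult_left_ennreal)
  finally show ?thesis .
qed

lemma dist_gt_if_disjoint_cballs:
  fixes x y :: "'a::real_normed_vector"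
  assumes disj: "cball x r \<inter> cball y t = {}" and "0 < r" "0 < t"
  shows "r + t < dist x y"
proof (rule ccontr)
  assume "\<not> r + t < dist x y"
  then have le: "dist x y \<le> r + t" by simp
  define c where "c = r / (r + t)"
  have c: "0 \<le> c" "c \<le> 1" "c * (r + t) = r" "(1 - c) * (r + t) = t"
    using assms(2,3) by (auto simp: c_def field_simps)
  define z where "z = x + c *\<^sub>R (y - x)"
  have "dist x z = c * dist x y"
    using c by (simp add: z_def dist_norm norm_minus_commute)
  also have "\<dots> \<le> r"
    using mult_left_mono[OF le c(1)] c(3) by simp
  finally have "z \<in> cball x r" by simp
  moreover have "y - z = (1 - c) *\<^sub>R (y - x)"
    by (simp add: z_def algebra_simps)
  then have "dist y z = (1 - c) * dist x y"
    using c by (simp add: dist_norm norm_minus_commute)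
  then have "dist y z \<le> t"
    using mult_left_mono[OF le, of "1 - c"] c by simp
  ultimately show False
    using disj by auto
qed

lemma disjoint_cballs_lipschitz_preimage:
  fixes \<Phi> :: "'a::metric_space \<Rightarrow> 'b::real_normed_vector"
  assumes "K > 0" "K-lipschitz_on F \<Phi>" "x \<in> F" "y \<in> F" "0 < r" "0 < t"
    and "cball (\<Phi> x) r \<inter> cball (\<Phi> y) t = {}"
  shows "cball x (r / K) \<inter> cball y (t / K) = {}"
proof (rule disjoint_cballI)
  have "r + t < dist (\<Phi> x) (\<Phi> y)"
    using assms by (intro dist_gt_if_disjoint_cballs)
  also have "\<dots> \<le> K * dist x y"
    using assms by (intro lipschitz_onD)
  finally show "r / K + t / K < dist x y"
    using \<open>K > 0\<close> by (simp add: field_simps)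
qed

definition packing_family :: "'a::metric_space set \<Rightarrow> real \<Rightarrow> ('a \<times> real) set \<Rightarrow> bool" where
  "packing_family F \<delta> P \<longleftrightarrow> countable P \<and> (\<forall>(x,r)\<in>P. x \<in> F \<and> 0 < r \<and> r \<le> \<delta>)
    \<and> disjoint_family_on (\<lambda>(x,r). cball x r) P"

lemma packing_delta_eq_SUP_packing_family:
  "packing_delta s \<delta> F
    = (SUP P \<in> {P. packing_family F \<delta> P}. \<Sum>\<^sub>\<infinity>(x,r)\<in>P. ennreal ((2 * r) powr s))"
  by (simp add: packing_delta_def packing_family_def)

lemma packing_delta_mono:
  assumes "E \<subseteq> F"
  shows "packing_delta s \<delta> E \<le> packing_delta s \<delta> F"
  unfolding packing_delta_eq_SUP_packing_family
proof (rule SUP_subset_mono)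
  show "{P. packing_family E \<delta> P} \<subseteq> {P. packing_family F \<delta> P}"
    using assms unfolding packing_family_def by (auto simp: case_prod_beta)
qed simp

lemma packing_pre_mono:
  assumes "E \<subseteq> F"
  shows "packing_pre s E \<le> packing_pre s F"
  unfolding packing_pre_def
  by (rule INF_mono) (use packing_delta_mono[OF assms] in auto)

lemma packing_family_lipschitz_pullback:
  fixes \<Phi> :: "'a::metric_space \<Rightarrow> 'b::real_normed_vector"
  assumes K: "K > 0" and lip: "K-lipschitz_on F \<Phi>" and "packing_family (\<Phi> ` F) \<delta> P"
  defines "h \<equiv> \<lambda>(y, r). (inv_into F \<Phi> y, r / K)"
  shows "inj_on h P" and "packing_family F (\<delta> / K) (h ` P)"
proof -
  have "countable P" and P: "\<And>y r. (y, r) \<in> P \<Longrightarrow> y \<in> \<Phi> ` F \<and> 0 < r \<and> r \<le> \<delta>"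
    and disj: "disjoint_family_on (\<lambda>(x,r). cball x r) P"
    using \<open>packing_family (\<Phi> ` F) \<delta> P\<close> by (auto simp: packing_family_def)
  have inv: "inv_into F \<Phi> y \<in> F" "\<Phi> (inv_into F \<Phi> y) = y" if "y \<in> \<Phi> ` F" for y
    using that by (auto simp: inv_into_into f_inv_into_f)
  show "inj_on h P"
  proof (rule inj_onI, clarify)
    fix y r z t assume "(y, r) \<in> P" "(z, t) \<in> P" "h (y, r) = h (z, t)"
    then show "y = z \<and> r = t"
      using K P inv(2) by (auto simp: h_def) metis
  qed
  have "disjoint_family_on (\<lambda>(x,r). cball x r) (h ` P)"
    unfolding disjoint_family_on_def
  proof (intro ballI impI)
    fix p q assume "p \<in> h ` P" "q \<in> h ` P" "p \<noteq> q"
    then obtain y r z t where yr: "(y, r) \<in> P" "p = h (y, r)" and zt: "(z, t) \<in> P" "q = h (z, t)"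
      and "(y, r) \<noteq> (z, t)"
      by auto
    then have "cball y r \<inter> cball z t = {}"
      using disj unfolding disjoint_family_on_def by fastforce
    then have "cball (inv_into F \<Phi> y) (r / K) \<inter> cball (inv_into F \<Phi> z) (t / K) = {}"
      using P[OF yr(1)] P[OF zt(1)] inv by (intro disjoint_cballs_lipschitz_preimage[OF K lip]) auto
    then show "(\<lambda>(x,r). cball x r) p \<inter> (\<lambda>(x,r). cball x r) q = {}"
      by (simp add: yr zt h_def)
  qed
  moreover have "\<forall>(x,r)\<in>h ` P. x \<in> F \<and> 0 < r \<and> r \<le> \<delta> / K"
    using K P inv(1) by (auto simp: h_def divide_right_mono)
  ultimately show "packing_family F (\<delta> / K) (h ` P)"
    using \<open>countable P\<close> by (simp add: packing_family_def)
qed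

lemma packing_delta_lipschitz_image_le:
  fixes \<Phi> :: "'a::metric_space \<Rightarrow> 'b::real_normed_vector"
  assumes K: "K > 0" and lip: "K-lipschitz_on F \<Phi>"
  shows "packing_delta s \<delta> (\<Phi> ` F) \<le> ennreal (K powr s) * packing_delta s (\<delta> / K) F"
  unfolding packing_delta_eq_SUP_packing_family
proof (rule SUP_least)
  fix P assume "P \<in> {P. packing_family (\<Phi> ` F) \<delta> P}"
  then have P: "packing_family (\<Phi> ` F) \<delta> P"
    by simp
  define h where "h = (\<lambda>(y, r). (inv_into F \<Phi> y, r / K))"
  note pullback = packing_family_lipschitz_pullback[OF K lip P, folded h_def]
  have scale: "ennreal (K powr s) * ennreal ((2 * (r / K)) powr s) = ennreal ((2 * r) powr s)"
    if "0 < r" for r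
    using K that by (simp add: powr_mult[symmetric] flip: ennreal_mult)
  have "ennreal (K powr s) * (\<Sum>\<^sub>\<infinity>(x,r)\<in>h ` P. ennreal ((2 * r) powr s))
      = (\<Sum>\<^sub>\<infinity>(y,r)\<in>P. ennreal (K powr s) * ennreal ((2 * (r / K)) powr s))"
    unfolding infsum_reindex[OF pullback(1)] infsum_cmult_right_ennreal[symmetric]
    by (auto simp: h_def intro!: infsum_cong)
  also have "\<dots> = (\<Sum>\<^sub>\<infinity>(x,r)\<in>P. ennreal ((2 * r) powr s))"
    using P scale by (intro infsum_cong) (auto simp: packing_family_def)
  finally have "(\<Sum>\<^sub>\<infinity>(x,r)\<in>P. ennreal ((2 * r) powr s))
      = ennreal (K powr s) * (\<Sum>\<^sub>\<infinity>(x,r)\<in>h ` P. ennreal ((2 * r) powr s))" ..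
  also have "\<dots> \<le> ennreal (K powr s) * (SUP P \<in> {P. packing_family F (\<delta> / K) P}.
        \<Sum>\<^sub>\<infinity>(x,r)\<in>P. ennreal ((2 * r) powr s))"
    using pullback(2) by (intro mult_left_mono SUP_upper) simp_all
  finally show "(\<Sum>\<^sub>\<infinity>(x,r)\<in>P. ennreal ((2 * r) powr s)) \<le> \<dots>" .
qed

lemma packing_pre_lipschitz_image_le:
  fixes \<Phi> :: "'a::metric_space \<Rightarrow> 'b::real_normed_vector"
  assumes K: "K > 0" and lip: "K-lipschitz_on F \<Phi>"
  shows "packing_pre s (\<Phi> ` F) \<le> ennreal (K powr s) * packing_pre s F"
proof -
  let ?c = "ennreal (K powr s)"
  have c: "0 < ?c" "?c < top"
    using K by simp_all
  have "packing_pre s (\<Phi> ` F) / ?c \<le> packing_pre s F"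
    unfolding packing_pre_def[of s F]
  proof (rule INF_greatest)
    fix \<delta> :: real assume "\<delta> \<in> {0<..}"
    then have "packing_pre s (\<Phi> ` F) \<le> packing_delta s (K * \<delta>) (\<Phi> ` F)"
      unfolding packing_pre_def using K by (intro INF_lower) simp
    also have "\<dots> \<le> ?c * packing_delta s \<delta> F"
      using packing_delta_lipschitz_image_le[OF K lip, of s "K * \<delta>"] K by simp
    finally show "packing_pre s (\<Phi> ` F) / ?c \<le> packing_delta s \<delta> F"
      by (intro divide_le_posI_ennreal c(1)) (simp add: mult.commute)
  qed
  then have "packing_pre s (\<Phi> ` F) / ?c * ?c \<le> packing_pre s F * ?c"
    by (rule mult_right_mono) simp
  moreover have "packing_pre s (\<Phi> ` F) / ?c * ?c = packing_pre s (\<Phi> ` F)"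
    using c by (simp only: ennreal_divide_times ennreal_times_divide mult_divide_eq_ennreal)
  ultimately show ?thesis
    by (simp add: mult.commute)
qed

lemma packing_measure_lipschitz_image_less_top:
  fixes \<Phi> :: "'a::metric_space \<Rightarrow> 'b::real_normed_vector"
  assumes K: "K > 0" and lip: "K-lipschitz_on F \<Phi>" and fin: "packing_measure s F < top"
  shows "packing_measure s (\<Phi> ` F) < top"
proof -
  let ?c = "ennreal (K powr s)"
  obtain A where A: "F \<subseteq> (\<Union>i. A i)" and sum_A: "(\<Sum>i. packing_pre s (A i)) < top"
    using fin unfolding packing_measure_def by (auto simp: INF_less_iff)
  have "\<Phi> ` F \<subseteq> (\<Union>i. \<Phi> ` (A i \<inter> F))"
    using A by blast
  then have "packing_measure s (\<Phi> ` F) \<le> (\<Sum>i. packing_pre s (\<Phi> ` (A i \<inter> F)))"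
    unfolding packing_measure_def by (intro INF_lower) simp
  also have "\<dots> \<le> (\<Sum>i. ?c * packing_pre s (A i))"
  proof (intro suminf_le allI)
    fix i
    have "packing_pre s (\<Phi> ` (A i \<inter> F)) \<le> ?c * packing_pre s (A i \<inter> F)"
      using lipschitz_on_subset[OF lip] by (intro packing_pre_lipschitz_image_le[OF K]) auto
    also have "\<dots> \<le> ?c * packing_pre s (A i)"
      by (intro mult_left_mono packing_pre_mono) auto
    finally show "packing_pre s (\<Phi> ` (A i \<inter> F)) \<le> ?c * packing_pre s (A i)" .
  qed simp_all
  also have "\<dots> = ?c * (\<Sum>i. packing_pre s (A i))"
    by (rule ennreal_suminf_cmult)
  also have "\<dots> < top"
    using sum_A by (simp add: ennreal_mult_less_top)
  finally show ?thesis .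
qed

lemma packing_dim_lipschitz_image_le:
  fixes \<Phi> :: "'a::metric_space \<Rightarrow> 'b::real_normed_vector"
  assumes lip: "K-lipschitz_on F \<Phi>"
  shows "packing_dim (\<Phi> ` F) \<le> packing_dim F"
proof -
  have "(K + 1)-lipschitz_on F \<Phi>" and "K + 1 > 0"
    using lip lipschitz_on_nonneg[OF lip] by (auto intro: lipschitz_on_le)
  then have "packing_measure s F = \<infinity>" if "packing_measure s (\<Phi> ` F) = \<infinity>" for s
    using packing_measure_lipschitz_image_less_top[of "K + 1" F \<Phi> s] that
    by (metis infinity_ennreal_def top.not_eq_extremum)
  then show ?thesis
    unfolding packing_dim_def by (intro Sup_subset_mono) blast
qed

lemma bounded_and_diameter_le_if_dist_le:
  fixes S :: "'a::metric_space set"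
  assumes "0 \<le> d" and dist: "\<And>x y. x \<in> S \<Longrightarrow> y \<in> S \<Longrightarrow> dist x y \<le> d"
  shows "bounded S" "diameter S \<le> d"
proof -
  show "bounded S"
  proof (cases "S = {}")
    case False
    then obtain x where "x \<in> S" by blast
    then show ?thesis
      unfolding bounded_def using dist by blast
  qed simp
  show "diameter S \<le> d"
    using assms by (auto simp: diameter_def intro: cSUP_least)
qed

lemma cover_num_attained:
  fixes F :: "'a::metric_space set"
  assumes "compact F" "\<delta> > 0"
  obtains C where "finite C" "\<forall>U\<in>C. bounded U \<and> diameter U \<le> \<delta>" "F \<subseteq> \<Union>C"
    "card C = cover_num F \<delta>"
proof -
  let ?covers = "{card C | C. finite C \<and> (\<forall>U\<in>C. bounded U \<and> diameter U \<le> \<delta>) \<and> F \<subseteq> \<Union>C}"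
  obtain k where k: "finite k" "F \<subseteq> (\<Union>x\<in>k. ball x (\<delta> / 2))"
    using assms compact_eq_totally_bounded[of F] by (meson half_gt_zero)
  have diam: "diameter (ball x (\<delta> / 2)) \<le> \<delta>" for x :: 'a
  proof (rule bounded_and_diameter_le_if_dist_le(2))
    show "0 \<le> \<delta>"
      using assms(2) by simp
    fix y z assume "y \<in> ball x (\<delta> / 2)" "z \<in> ball x (\<delta> / 2)"
    then show "dist y z \<le> \<delta>"
      using dist_triangle2[of y z x] by (simp add: dist_commute)
  qed
  define B where "B = (\<lambda>x. ball x (\<delta> / 2)) ` k"
  have "finite B" "\<forall>U\<in>B. bounded U \<and> diameter U \<le> \<delta>" "F \<subseteq> \<Union>B"
    using k diam by (auto simp: B_def)
  then have "card B \<in> ?covers"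
    by blast
  then have "Inf ?covers \<in> ?covers"
    by (intro Inf_nat_def1) auto
  then show ?thesis
    unfolding mem_Collect_eq by (elim exE conjE) (rule that, simp_all add: cover_num_def)
qed

lemma cover_num_lipschitz_image_le:
  fixes \<Phi> :: "'a::metric_space \<Rightarrow> 'b::metric_space"
  assumes K: "K > 0" and lip: "K-lipschitz_on F \<Phi>" and "compact F" "\<delta> > 0"
  shows "cover_num (\<Phi> ` F) \<delta> \<le> cover_num F (\<delta> / K)"
proof -
  obtain C where C: "finite C" "\<And>U. U \<in> C \<Longrightarrow> bounded U \<and> diameter U \<le> \<delta> / K" "F \<subseteq> \<Union>C"
    "card C = cover_num F (\<delta> / K)"
    using cover_num_attained[OF \<open>compact F\<close>, of "\<delta> / K"] K \<open>\<delta> > 0\<close> by (metis divide_pos_pos)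
  define C' where "C' = (\<lambda>U. \<Phi> ` (U \<inter> F)) ` C"
  have "bounded V \<and> diameter V \<le> \<delta>" if "V \<in> C'" for V
  proof -
    obtain U where U: "U \<in> C" "V = \<Phi> ` (U \<inter> F)"
      using \<open>V \<in> C'\<close> unfolding C'_def by blast
    have "dist (\<Phi> u) (\<Phi> v) \<le> \<delta>" if "u \<in> U \<inter> F" "v \<in> U \<inter> F" for u v
    proof -
      have "dist (\<Phi> u) (\<Phi> v) \<le> K * dist u v"
        using that by (intro lipschitz_onD[OF lip]) auto
      also have "dist u v \<le> \<delta> / K"
        using C(2)[OF U(1)] that diameter_bounded_bound[of U u v] by simp
      then have "K * dist u v \<le> K * (\<delta> / K)"
        using K by (intro mult_left_mono) simp_all
      finally show ?thesis
        using K by simp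
    qed
    then have "\<And>x y. x \<in> V \<Longrightarrow> y \<in> V \<Longrightarrow> dist x y \<le> \<delta>"
      unfolding U(2) by blast
    then show ?thesis
      using \<open>\<delta> > 0\<close> bounded_and_diameter_le_if_dist_le[of \<delta> V] by simp
  qed
  moreover have "\<Phi> ` F \<subseteq> \<Union>C'"
    using C(3) unfolding C'_def by blast
  moreover have "finite C'"
    using C(1) unfolding C'_def by simp
  ultimately have "cover_num (\<Phi> ` F) \<delta> \<le> card C'"
    unfolding cover_num_def by (intro cInf_lower) blast+
  also have "\<dots> \<le> card C"
    unfolding C'_def using C(1) by (rule card_image_le)
  finally show ?thesis
    using C(4) by simp
qed

lemma ereal_le_if_le_mult_epsilon:
  fixes x y :: ereal
  assumes le: "\<And>e. e > 0 \<Longrightarrow> x \<le> ereal (1 + e) * y"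
  shows "x \<le> y"
proof (cases y)
  case (real r)
  show ?thesis
  proof (rule ereal_le_epsilon2)
    fix e :: real assume "e > 0"
    define e' where "e' = e / (\<bar>r\<bar> + 1)"
    have "e' > 0" "e' * (\<bar>r\<bar> + 1) = e"
      using \<open>e > 0\<close> by (simp_all add: e'_def)
    moreover have "e' * r \<le> e' * (\<bar>r\<bar> + 1)"
      using \<open>e' > 0\<close> by (intro mult_left_mono) auto
    ultimately have "(1 + e') * r \<le> r + e"
      by (simp add: algebra_simps)
    have "x \<le> ereal ((1 + e') * r)"
      using le[OF \<open>e' > 0\<close>] real by simp
    also have "\<dots> \<le> y + ereal e"
      using \<open>(1 + e') * r \<le> r + e\<close> real by simp
    finally show "x \<le> y + ereal e" .
  qed
qed (use le[of 1] in auto)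

lemma eventually_log_ratio_rescaled_le:
  fixes NE NF :: "real \<Rightarrow> nat"
  assumes K: "K \<ge> 1" and N: "\<And>\<delta>. \<delta> > 0 \<Longrightarrow> NE \<delta> \<le> NF (\<delta> / K)" and e: "e > 0"
  shows "\<forall>\<^sub>F \<delta> in at_right 0. ereal (ln (real (NE \<delta>)) / - ln \<delta>)
    \<le> ereal (1 + e) * ereal (ln (real (NF (\<delta> / K))) / - ln (\<delta> / K))"
proof -
  have "filterlim (\<lambda>\<delta>. - ln \<delta>) at_top (at_right (0::real))"
    using ln_at_0 by (simp add: filterlim_uminus_at_top)
  then have "\<forall>\<^sub>F \<delta> in at_right 0. max 1 (ln K / e) \<le> - ln \<delta>"
    unfolding filterlim_at_top by blast
  with eventually_at_right_less[of 0] show ?thesis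
  proof eventually_elim
    case (elim \<delta>)
    define x where "x = - ln \<delta>"
    define y where "y = - ln (\<delta> / K)"
    define A where "A = ln (real (NF (\<delta> / K)))"
    define B where "B = ln (real (NE \<delta>))"
    have x: "1 \<le> x" "ln K \<le> e * x"
      using elim(2) e by (auto simp: x_def pos_divide_le_eq mult.commute)
    have "y = x + ln K"
      using elim(1) K by (simp add: x_def y_def ln_div)
    then have y: "x \<le> y" "y \<le> (1 + e) * x"
      using x K by (simp_all add: algebra_simps)
    have "0 \<le> A"
      by (cases "NF (\<delta> / K) = 0") (simp_all add: A_def)
    \<comment> \<open>\<open>ln 0 = 0\<close> in HOL, so an empty cover count is harmless\<close>
    have "B \<le> A"
      using N[OF elim(1)] \<open>0 \<le> A\<close> by (cases "NE \<delta> = 0") (simp_all add: A_def B_def)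
    then have "B / x \<le> A / x"
      by (rule divide_right_mono) (use x in simp)
    also have "\<dots> \<le> (1 + e) * A / y"
    proof -
      have "A * y \<le> A * ((1 + e) * x)"
        using y(2) \<open>0 \<le> A\<close> by (rule mult_left_mono)
      moreover have "0 < x" "0 < y"
        using x y by simp_all
      ultimately show ?thesis
        by (simp add: field_simps)
    qed
    finally show ?case
      unfolding A_def B_def x_def y_def by simp
  qed
qed

lemma Limsup_Liminf_log_ratio_mono:
  fixes NE NF :: "real \<Rightarrow> nat"
  assumes K: "K \<ge> 1" and N: "\<And>\<delta>. \<delta> > 0 \<Longrightarrow> NE \<delta> \<le> NF (\<delta> / K)"
  shows "Limsup (at_right 0) (\<lambda>\<delta>. ereal (ln (real (NE \<delta>)) / - ln \<delta>))
      \<le> Limsup (at_right 0) (\<lambda>\<delta>. ereal (ln (real (NF \<delta>)) / - ln \<delta>))"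
    and "Liminf (at_right 0) (\<lambda>\<delta>. ereal (ln (real (NE \<delta>)) / - ln \<delta>))
      \<le> Liminf (at_right 0) (\<lambda>\<delta>. ereal (ln (real (NF \<delta>)) / - ln \<delta>))"
proof -
  define u where "u = (\<lambda>\<delta>. ereal (ln (real (NE \<delta>)) / - ln \<delta>))"
  define v where "v = (\<lambda>\<delta>. ereal (ln (real (NF \<delta>)) / - ln \<delta>))"
  have le: "\<forall>\<^sub>F \<delta> in at_right 0. u \<delta> \<le> ereal (1 + e) * v (\<delta> / K)" if "e > 0" for e
    using eventually_log_ratio_rescaled_le[where NE=NE and NF=NF, OF K N that] by (simp add: u_def v_def)
  have rescale: "filtermap (\<lambda>\<delta>. \<delta> / K) (at_right 0) = at_right (0::real)"
    "inj (\<lambda>\<delta>::real. \<delta> / K)"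
    using filtermap_times_pos_at_right[of "inverse K" 0] K
    by (simp_all add: divide_inverse_commute inj_on_def)
  show "Limsup (at_right 0) u \<le> Limsup (at_right 0) v"
  proof (rule ereal_le_if_le_mult_epsilon)
    fix e :: real assume "e > 0"
    have "Limsup (at_right 0) u \<le> Limsup (at_right 0) (\<lambda>\<delta>. ereal (1 + e) * v (\<delta> / K))"
      by (rule Limsup_mono[OF le[OF \<open>e > 0\<close>]])
    also have "\<dots> = ereal (1 + e) * Limsup (at_right 0) v"
      using Limsup_ereal_mult_left[of "at_right 0" "1 + e" "\<lambda>\<delta>. v (\<delta> / K)"] \<open>e > 0\<close>
        Limsup_filtermap_eq[OF rescale(2), of "at_right 0" v] rescale(1)
      by simp
    finally show "Limsup (at_right 0) u \<le> ereal (1 + e) * Limsup (at_right 0) v" .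
  qed
  show "Liminf (at_right 0) u \<le> Liminf (at_right 0) v"
  proof (rule ereal_le_if_le_mult_epsilon)
    fix e :: real assume "e > 0"
    have "Liminf (at_right 0) u \<le> Liminf (at_right 0) (\<lambda>\<delta>. ereal (1 + e) * v (\<delta> / K))"
      by (rule Liminf_mono[OF le[OF \<open>e > 0\<close>]])
    also have "\<dots> = ereal (1 + e) * Liminf (at_right 0) v"
      using Liminf_ereal_mult_left[of "at_right 0" "1 + e" "\<lambda>\<delta>. v (\<delta> / K)"] \<open>e > 0\<close>
        Liminf_filtermap_eq[OF rescale(2), of "at_right 0" v] rescale(1)
      by simp
    finally show "Liminf (at_right 0) u \<le> ereal (1 + e) * Liminf (at_right 0) v" .
  qed
qed

lemma box_dims_lipschitz_image_le:
  fixes \<Phi> :: "'a::metric_space \<Rightarrow> 'b::metric_space"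
  assumes lip: "K-lipschitz_on F \<Phi>" and "compact F"
  shows "upper_box_dim (\<Phi> ` F) \<le> upper_box_dim F"
    and "lower_box_dim (\<Phi> ` F) \<le> lower_box_dim F"
proof -
  have lip1: "(max 1 K)-lipschitz_on F \<Phi>"
    using lip by (rule lipschitz_on_le) simp
  have "cover_num (\<Phi> ` F) \<delta> \<le> cover_num F (\<delta> / max 1 K)" if "\<delta> > 0" for \<delta>
    using \<open>compact F\<close> that by (intro cover_num_lipschitz_image_le[OF _ lip1]) simp_all
  note mono = Limsup_Liminf_log_ratio_mono[where K="max 1 K" and NE="cover_num (\<Phi> ` F)"
      and NF="cover_num F", OF _ this]
  show "upper_box_dim (\<Phi> ` F) \<le> upper_box_dim F"
    unfolding upper_box_dim_def by (rule mono(1)) simp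
  show "lower_box_dim (\<Phi> ` F) \<le> lower_box_dim F"
    unfolding lower_box_dim_def by (rule mono(2)) simp
qed

lemma dims_lipschitz_image_eq:
  fixes \<Phi> :: "'a::real_normed_vector \<Rightarrow> 'b::real_normed_vector" and \<Psi> :: "'b \<Rightarrow> 'a"
  assumes "compact F" "K-lipschitz_on F \<Phi>" "M-lipschitz_on (\<Phi> ` F) \<Psi>" "\<Psi> ` \<Phi> ` F = F"
  shows "packing_dim (\<Phi> ` F) = packing_dim F
    \<and> upper_box_dim (\<Phi> ` F) = upper_box_dim F
    \<and> lower_box_dim (\<Phi> ` F) = lower_box_dim F"
proof -
  have "compact (\<Phi> ` F)"
    using assms(1,2) by (intro compact_continuous_image lipschitz_on_continuous_on)
  then show ?thesis
    using packing_dim_lipschitz_image_le[OF assms(2)] packing_dim_lipschitz_image_le[OF assms(3)]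
      box_dims_lipschitz_image_le[OF assms(2,1)] box_dims_lipschitz_image_le[OF assms(3)] assms(4)
    by (metis order_antisym)
qed

lemma lipschitz_on_graph_lift:
  fixes f :: "real \<Rightarrow> complex"
  assumes lip: "L-lipschitz_on S (\<lambda>x. Im (f x))"
  shows "(sqrt (1 + L\<^sup>2))-lipschitz_on (graph_on S (\<lambda>x. Re (f x))) (\<lambda>p. (fst p, f (fst p)))"
proof (rule lipschitz_onI)
  fix p q assume "p \<in> graph_on S (\<lambda>x. Re (f x))" "q \<in> graph_on S (\<lambda>x. Re (f x))"
  then obtain x y where xy: "x \<in> S" "y \<in> S" "p = (x, Re (f x))" "q = (y, Re (f y))"
    unfolding graph_on_def by blast
  have "\<bar>Im (f x) - Im (f y)\<bar> \<le> L * \<bar>x - y\<bar>"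
    using lipschitz_onD[OF lip xy(1,2)] by (simp add: dist_real_def)
  then have "\<bar>Im (f x) - Im (f y)\<bar>\<^sup>2 \<le> (L * \<bar>x - y\<bar>)\<^sup>2"
    by (rule power_mono) simp
  then have im: "(Im (f x) - Im (f y))\<^sup>2 \<le> L\<^sup>2 * (x - y)\<^sup>2"
    by (simp add: power_mult_distrib)
  have "(dist (fst p, f (fst p)) (fst q, f (fst q)))\<^sup>2 = (x - y)\<^sup>2 + (cmod (f x - f y))\<^sup>2"
    by (simp add: xy dist_norm norm_Pair)
  also have "\<dots> \<le> (x - y)\<^sup>2 + (Re (f x) - Re (f y))\<^sup>2 + L\<^sup>2 * (x - y)\<^sup>2"
    using im by (simp add: cmod_power2)
  also have "\<dots> \<le> (1 + L\<^sup>2) * ((x - y)\<^sup>2 + (Re (f x) - Re (f y))\<^sup>2)"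
    by (simp add: algebra_simps)
  also have "\<dots> = (sqrt (1 + L\<^sup>2) * dist p q)\<^sup>2"
    by (simp add: xy dist_Pair_Pair dist_real_def power_mult_distrib)
  finally show "dist (fst p, f (fst p)) (fst q, f (fst q)) \<le> sqrt (1 + L\<^sup>2) * dist p q"
    by (rule power2_le_imp_le) simp
qed simp

lemma lipschitz_on_fst_Re_snd: "1-lipschitz_on A (\<lambda>p::real \<times> complex. (fst p, Re (snd p)))"
proof (rule lipschitz_onI)
  fix p q :: "real \<times> complex"
  have "dist (Re (snd p)) (Re (snd q)) \<le> dist (snd p) (snd q)"
    by (metis abs_Re_le_cmod dist_complex_def dist_real_def minus_complex.sel(1))
  then show "dist (fst p, Re (snd p)) (fst q, Re (snd q)) \<le> 1 * dist p q"
    by (simp add: dist_Pair_Pair dist_prod_def power_mono)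
qed simp

theorem mainTheorem3:
  fixes f :: "real \<Rightarrow> complex" and a b :: real
  assumes "continuous_on {a..b} f"
    and "\<exists>L. L-lipschitz_on {a..b} (\<lambda>x. Im (f x))"
  shows "packing_dim (graph_on {a..b} f) = packing_dim (graph_on {a..b} (\<lambda>x. Re (f x)))
    \<and> upper_box_dim (graph_on {a..b} f) = upper_box_dim (graph_on {a..b} (\<lambda>x. Re (f x)))
    \<and> lower_box_dim (graph_on {a..b} f) = lower_box_dim (graph_on {a..b} (\<lambda>x. Re (f x)))"
proof -
  obtain L where L: "L-lipschitz_on {a..b} (\<lambda>x. Im (f x))"
    using assms(2) by blast
  define F where "F = graph_on {a..b} (\<lambda>x. Re (f x))"
  define \<Phi> where "\<Phi> = (\<lambda>p::real \<times> real. (fst p, f (fst p)))"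
  define \<Psi> where "\<Psi> = (\<lambda>p::real \<times> complex. (fst p, Re (snd p)))"
  have "compact F"
    unfolding F_def graph_on_def
    by (intro compact_continuous_image continuous_intros assms(1)) simp
  moreover have "graph_on {a..b} f = \<Phi> ` F" "\<Psi> ` \<Phi> ` F = F"
    by (simp_all add: F_def \<Phi>_def \<Psi>_def graph_on_def image_image)
  ultimately show ?thesis
    using dims_lipschitz_image_eq[of F _ \<Phi> 1 \<Psi>]
      lipschitz_on_graph_lift[OF L] lipschitz_on_fst_Re_snd
    by (simp add: F_def \<Phi>_def \<Psi>_def)
qed

end
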